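(* Consider an equation system $X=_\mu F$ where $F$ is a quantitative formula possibly containing $\min$. Suppose there are $u\in\mathbb{E}(D)$ with $[\![F^{\max}]\!](u)\le u$, a function $r\colon D\to[0,\infty)$ with $[\![\mathsf{D}(F^{\max})]\!](r)+u\le r$, and $\eta\in\mathbb{E}(D)$ with $\eta\le u$ and $[\![F]\!](\eta)\ge\eta$. Then $\eta$ is a lower bound of the least fixed point of $[\![F]\!]$, i.e. $\eta\le\mu[\![F]\!]$.
   Context: $\mathbb{E}(D)$ is the set of functions $D\to[0,\infty]$ with pointwise order and operations ($\infty+x=\infty$, $0\cdot\infty=0$, $r\cdot\infty=\infty$ for $r>0$). Quantitative formulas over a predicate variable $X$ (of type $D\to\Omega$) with minimum are: $F ::= X(\tilde e)\mid t\mid F_1+F_2\mid t\cdot F\mid \mathbf{if}\ \varphi\ \mathbf{then}\ F_1\ \mathbf{else}\ F_2\mid\min\{F_1,\dots,F_n\}$, with $\tilde e$ expressions, $t$ a $[0,\infty)$-valued term, $\varphi$ boolean; interpreted as maps $\mathbb{E}(D)\to\mathbb{E}(D)$ by $[\![X(e)]\!](\eta)(v)=\eta([\![e]\!](v))$, $[\![t]\!](\eta)(v)=[\![t]\!](v)$, pointwise sum and scalar product, case distinction for conditionals, and pointwise minimum for $\min$. $F^{\max}$ is obtained from $F$ by replacing every $\min$ by $\max$ (interpreted as pointwise maximum). $\mathsf{D}F$ is defined syntactically: $\mathsf{D}(X(\tilde e))=X(\tilde e)$, $\mathsf{D}t=0$, $\mathsf{D}(F_1+F_2)=\mathsf{D}F_1+\mathsf{D}F_2$,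 $\mathsf{D}(t\cdot F)=t\cdot\mathsf{D}F$, $\mathsf{D}(\mathbf{if}\ \varphi\ \mathbf{then}\ F_1\ \mathbf{else}\ F_2)=\mathbf{if}\ \varphi\ \mathbf{then}\ \mathsf{D}F_1\ \mathbf{else}\ \mathsf{D}F_2$, $\mathsf{D}(\min\{F_1,\dots,F_n\})=\min\{\mathsf{D}F_1,\dots,\mathsf{D}F_n\}$ (and likewise for $\max$). *)

theory Defs
  imports "HOL-Library.Extended_Nonnegative_Real" "HOL-Library.Function_Algebras"
begin

text \<open>Expressions e are given semantically as maps D -> D (D may be a tuple type),
  terms t as maps D -> ennreal (required to be finite by qwf), guards as
  predicates on D.\<close>

datatype 'd qform =
    QVar "'d \<Rightarrow> 'd"
  | QConst "'d \<Rightarrow> ennreal"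
  | QPlus "'d qform" "'d qform"
  | QScale "'d \<Rightarrow> ennreal" "'d qform"
  | QIte "'d \<Rightarrow> bool" "'d qform" "'d qform"
  | QMin "'d qform list"
  | QMax "'d qform list"

primrec qwf :: "'d qform \<Rightarrow> bool" where
  "qwf (QVar e) = True"
| "qwf (QConst t) = (\<forall>v. t v < \<infinity>)"
| "qwf (QPlus F G) = (qwf F \<and> qwf G)"
| "qwf (QScale t F) = ((\<forall>v. t v < \<infinity>) \<and> qwf F)"
| "qwf (QIte b F G) = (qwf F \<and> qwf G)"
| "qwf (QMin Fs) = (Fs \<noteq> [] \<and> list_all id (map qwf Fs))"
| "qwf (QMax Fs) = (Fs \<noteq> [] \<and> list_all id (map qwf Fs))"

primrec qsem :: "'d qform \<Rightarrow> ('d \<Rightarrow> ennreal) \<Rightarrow> 'd \<Rightarrow> ennreal" where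
  "qsem (QVar e) = (\<lambda>\<eta> v. \<eta> (e v))"
| "qsem (QConst t) = (\<lambda>\<eta> v. t v)"
| "qsem (QPlus F G) = (\<lambda>\<eta> v. qsem F \<eta> v + qsem G \<eta> v)"
| "qsem (QScale t F) = (\<lambda>\<eta> v. t v * qsem F \<eta> v)"
| "qsem (QIte b F G) = (\<lambda>\<eta> v. if b v then qsem F \<eta> v else qsem G \<eta> v)"
| "qsem (QMin Fs) = (\<lambda>\<eta> v. Min (set (map (\<lambda>f. f \<eta> v) (map qsem Fs))))"
| "qsem (QMax Fs) = (\<lambda>\<eta> v. Max (set (map (\<lambda>f. f \<eta> v) (map qsem Fs))))"

primrec qmaxify :: "'d qform \<Rightarrow> 'd qform" where
  "qmaxify (QVar e) = QVar e"
| "qmaxify (QConst t) = QConst t"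
| "qmaxify (QPlus F G) = QPlus (qmaxify F) (qmaxify G)"
| "qmaxify (QScale t F) = QScale t (qmaxify F)"
| "qmaxify (QIte b F G) = QIte b (qmaxify F) (qmaxify G)"
| "qmaxify (QMin Fs) = QMax (map qmaxify Fs)"
| "qmaxify (QMax Fs) = QMax (map qmaxify Fs)"

primrec qD :: "'d qform \<Rightarrow> 'd qform" where
  "qD (QVar e) = QVar e"
| "qD (QConst t) = QConst (\<lambda>_. 0)"
| "qD (QPlus F G) = QPlus (qD F) (qD G)"
| "qD (QScale t F) = QScale t (qD F)"
| "qD (QIte b F G) = QIte b (qD F) (qD G)"
| "qD (QMin Fs) = QMin (map qD Fs)"
| "qD (QMax Fs) = QMax (map qD Fs)"

end

(* The least fixed point \<mu> of [[F]] lies below u, because [[F]] \<le> [[F^max]], and hence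
   is finite, because u \<le> r.  The join \<nu> = \<eta> \<squnion> \<mu> is a post-fixed point, and its excess
   d = \<nu> - \<mu> over \<mu> satisfies d \<le> L d for the linear operator L = [[D(F^max)]], since
   [[F]](\<mu> + d) \<le> [[F]] \<mu> + L d.  As L is monotone and positively homogeneous, the
   hypothesis L r + u \<le> r gives n d \<le> r for every n by induction; r is finite, so d = 0,
   that is \<eta> \<le> \<mu>. *)

theory Submission
  imports Defs
begin

lemma qsem_QMin_image: "qsem (QMin Fs) \<eta> v = Min ((\<lambda>F. qsem F \<eta> v) ` set Fs)"
  by (simp add: image_image)

lemma qsem_QMax_image: "qsem (QMax Fs) \<eta> v = Max ((\<lambda>F. qsem F \<eta> v) ` set Fs)"
  by (simp add: image_image)

declare qsem.simps(6,7)[simp del] qsem_QMin_image[simp] qsem_QMax_image[simp]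

lemma qwf_qmaxify: "qwf F \<Longrightarrow> qwf (qmaxify F)"
  by (induction F) (auto simp: list_all_iff)

lemma mono_qsem: "mono (qsem F)"
proof (rule monoI, rule le_funI)
  fix a b :: "'a \<Rightarrow> ennreal" and v
  assume "a \<le> b"
  then show "qsem F a v \<le> qsem F b v"
  proof (induction F arbitrary: v)
    case (QMin Fs)
    then show ?case
      by (cases "Fs = []") (auto intro!: Min.boundedI intro: order_trans[OF Min_le])
  next
    case (QMax Fs)
    then show ?case
      by (cases "Fs = []") (auto intro!: Max.boundedI intro: order_trans[OF _ Max_ge])
  qed (auto simp: le_fun_def mult_left_mono add_mono)
qed

lemma qsem_le_qsem_qmaxify: "qwf F \<Longrightarrow> qsem F \<eta> \<le> qsem (qmaxify F) \<eta>"
proof (rule le_funI)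
  fix v
  show "qwf F \<Longrightarrow> qsem F \<eta> v \<le> qsem (qmaxify F) \<eta> v"
  proof (induction F arbitrary: v)
    case (QMin Fs)
    then obtain F0 where F0: "F0 \<in> set Fs" "qwf F0" by (cases Fs) (auto simp: list_all_iff)
    have "Min ((\<lambda>F. qsem F \<eta> v) ` set Fs) \<le> qsem F0 \<eta> v" using F0 by simp
    also have "\<dots> \<le> qsem (qmaxify F0) \<eta> v" using QMin.IH F0 by blast
    also have "\<dots> \<le> Max ((\<lambda>F. qsem F \<eta> v) ` set (map qmaxify Fs))" using F0 by simp
    finally show ?case by simp
  next
    case (QMax Fs)
    then show ?case
      by (auto simp: list_all_iff intro!: Max.boundedI intro: order_trans[OF _ Max_ge])
  qed (auto intro: mult_left_mono add_mono)
qed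

text \<open>For a minimum, the branch attaining the minimum at a bounds the minimum at a + d.\<close>

lemma qsem_add_le:
  assumes "qwf F"
  shows "qsem F (a + d) \<le> qsem F a + qsem (qD (qmaxify F)) d"
proof (rule le_funI)
  fix v
  have "qsem F (\<lambda>x. a x + d x) v \<le> qsem F a v + qsem (qD (qmaxify F)) d v"
    using assms
  proof (induction F arbitrary: v)
    case (QScale t F)
    then have "t v * qsem F (\<lambda>x. a x + d x) v \<le> t v * (qsem F a v + qsem (qD (qmaxify F)) d v)"
      by (intro mult_left_mono) auto
    then show ?case by (simp add: distrib_left)
  next
    case (QPlus F G)
    then have "qsem F (\<lambda>x. a x + d x) v + qsem G (\<lambda>x. a x + d x) v
        \<le> (qsem F a v + qsem (qD (qmaxify F)) d v) + (qsem G a v + qsem (qD (qmaxify G)) d v)"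
      by (intro add_mono) auto
    then show ?case by (simp add: ac_simps)
  next
    case (QMin Fs)
    let ?Dd = "Max ((\<lambda>F. qsem F d v) ` set (map (qD \<circ> qmaxify) Fs))"
    have "Min ((\<lambda>F. qsem F a v) ` set Fs) \<in> (\<lambda>F. qsem F a v) ` set Fs"
      using QMin.prems by (intro Min_in) (auto simp: list_all_iff)
    then obtain F0 where F0: "F0 \<in> set Fs" "qsem F0 a v = Min ((\<lambda>F. qsem F a v) ` set Fs)"
      by auto
    have "Min ((\<lambda>F. qsem F (\<lambda>x. a x + d x) v) ` set Fs) \<le> qsem F0 (\<lambda>x. a x + d x) v"
      using F0 by simp
    also have "\<dots> \<le> qsem F0 a v + qsem (qD (qmaxify F0)) d v"
      using QMin.IH QMin.prems F0(1) by (auto simp: list_all_iff)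
    also have "\<dots> \<le> qsem F0 a v + ?Dd"
      using F0 by (intro add_left_mono Max_ge) auto
    finally show ?case using F0 by simp
  next
    case (QMax Fs)
    let ?Dd = "Max ((\<lambda>F. qsem F d v) ` set (map (qD \<circ> qmaxify) Fs))"
    have "Max ((\<lambda>F. qsem F (\<lambda>x. a x + d x) v) ` set Fs)
        \<in> (\<lambda>F. qsem F (\<lambda>x. a x + d x) v) ` set Fs"
      using QMax.prems by (intro Max_in) (auto simp: list_all_iff)
    then obtain F0 where F0: "F0 \<in> set Fs"
      "qsem F0 (\<lambda>x. a x + d x) v = Max ((\<lambda>F. qsem F (\<lambda>x. a x + d x) v) ` set Fs)"
      by auto
    have "qsem F0 (\<lambda>x. a x + d x) v \<le> qsem F0 a v + qsem (qD (qmaxify F0)) d v"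
      using QMax.IH QMax.prems F0(1) by (auto simp: list_all_iff)
    also have "\<dots> \<le> Max ((\<lambda>F. qsem F a v) ` set Fs) + ?Dd"
      using F0 by (intro add_mono Max_ge) auto
    finally show ?case using F0 by simp
  qed auto
  then show "qsem F (a + d) v \<le> (qsem F a + qsem (qD (qmaxify F)) d) v"
    by (simp add: plus_fun_def)
qed

lemma qsem_qD_cmult:
  fixes c :: ennreal
  assumes "qwf G"
  shows "qsem (qD G) (\<lambda>x. c * r x) = (\<lambda>v. c * qsem (qD G) r v)"
proof
  fix v
  have mono_cmult: "mono (\<lambda>x. c * x)" by (rule monoI) (rule mult_left_mono, auto)
  show "qsem (qD G) (\<lambda>x. c * r x) v = c * qsem (qD G) r v"
    using assms
  proof (induction G arbitrary: v)
    case (QMin Fs)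
    then have "(\<lambda>F. qsem (qD F) (\<lambda>x. c * r x) v) ` set Fs = (\<lambda>F. c * qsem (qD F) r v) ` set Fs"
      by (intro image_cong) (auto simp: list_all_iff)
    with QMin.prems show ?case
      by (simp add: image_image mono_Min_commute[OF mono_cmult])
  next
    case (QMax Fs)
    then have "(\<lambda>F. qsem (qD F) (\<lambda>x. c * r x) v) ` set Fs = (\<lambda>F. c * qsem (qD F) r v) ` set Fs"
      by (intro image_cong) (auto simp: list_all_iff)
    with QMax.prems show ?case
      by (simp add: image_image mono_Max_commute[OF mono_cmult])
  qed (auto simp: distrib_left mult.left_commute)
qed

lemma ennreal_eq_0_if_multiples_bounded:
  fixes x y :: ennreal
  assumes "y < \<infinity>" and "\<And>n. of_nat n * x \<le> y"
  shows "x = 0"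
proof (rule ccontr)
  assume "x \<noteq> 0"
  then have "\<infinity> = (SUP n. of_nat n) * x"
    by (simp add: ennreal_SUP_of_nat_eq_top ennreal_top_mult)
  also have "\<dots> = (SUP n. of_nat n * x)"
    by (simp add: SUP_mult_right_ennreal)
  also have "\<dots> \<le> y"
    by (rule SUP_least) (rule assms(2))
  finally show False using assms(1) by simp
qed

text \<open>By homogeneity, every multiple n d stays below the finite r.\<close>

lemma subsolution_eq_0:
  fixes L :: "('a \<Rightarrow> ennreal) \<Rightarrow> 'a \<Rightarrow> ennreal"
  assumes "mono L"
    and homogeneous: "\<And>c f. L (\<lambda>x. c * f x) = (\<lambda>x. c * L f x)"
    and "L r + u \<le> r" and "\<forall>v. r v < \<infinity>"
    and "d \<le> L d" and "d \<le> u"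
  shows "d = 0"
proof -
  have multiples_le: "(\<lambda>x. of_nat n * d x) \<le> r" for n
  proof (induction n)
    case (Suc n)
    have "of_nat (Suc n) * d v \<le> r v" for v
    proof -
      have "of_nat n * d v \<le> of_nat n * L d v"
        using \<open>d \<le> L d\<close> by (intro mult_left_mono) (auto simp: le_fun_def)
      also have "\<dots> = L (\<lambda>x. of_nat n * d x) v"
        by (simp add: homogeneous)
      also have "\<dots> \<le> L r v"
        using monoD[OF \<open>mono L\<close> Suc.IH] by (simp add: le_fun_def)
      finally have "of_nat n * d v + d v \<le> L r v + u v"
        using \<open>d \<le> u\<close> by (intro add_mono) (auto simp: le_fun_def)
      also have "\<dots> \<le> r v"
        using \<open>L r + u \<le> r\<close> by (simp add: le_fun_def)
      finally show ?thesis by (simp add: distrib_right add.commute)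
    qed
    then show ?case by (simp add: le_fun_def)
  qed (simp add: le_fun_def)
  show ?thesis
  proof
    fix v
    show "d v = 0 v"
      using assms(4) multiples_le
      by (auto intro: ennreal_eq_0_if_multiples_bounded[of "r v"] simp: le_fun_def)
  qed
qed

lemma postfixpoint_increment_le_qD:
  assumes "qwf F" and fixpoint: "qsem F \<mu> = \<mu>" and "\<forall>v. \<mu> v < \<infinity>"
    and "\<mu> \<le> \<nu>" and "\<nu> \<le> qsem F \<nu>"
  shows "\<nu> - \<mu> \<le> qsem (qD (qmaxify F)) (\<nu> - \<mu>)"
proof (rule le_funI)
  fix v
  have "\<nu> = \<mu> + (\<nu> - \<mu>)"
    using \<open>\<mu> \<le> \<nu>\<close> by (auto simp: le_fun_def add_diff_self_ennreal)
  then have "\<mu> + (\<nu> - \<mu>) \<le> qsem F \<mu> + qsem (qD (qmaxify F)) (\<nu> - \<mu>)"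
    using \<open>\<nu> \<le> qsem F \<nu>\<close> qsem_add_le[OF \<open>qwf F\<close>, of \<mu> "\<nu> - \<mu>"] by simp
  then have "\<mu> v + (\<nu> - \<mu>) v \<le> \<mu> v + qsem (qD (qmaxify F)) (\<nu> - \<mu>) v"
    unfolding fixpoint by (simp add: le_fun_def)
  then show "(\<nu> - \<mu>) v \<le> qsem (qD (qmaxify F)) (\<nu> - \<mu>) v"
    using assms(3)[rule_format, of v] by (auto simp: ennreal_add_left_cancel_le)
qed

theorem theoremE4:
  fixes F :: "'d qform" and u r \<eta> :: "'d \<Rightarrow> ennreal"
  assumes "qwf F"
    and "qsem (qmaxify F) u \<le> u"
    and "\<forall>v. r v < \<infinity>"
    and "qsem (qD (qmaxify F)) r + u \<le> r"
    and "\<eta> \<le> u"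
    and "\<eta> \<le> qsem F \<eta>"
  shows "\<eta> \<le> lfp (qsem F)"
proof -
  let ?\<mu> = "lfp (qsem F)" and ?\<nu> = "sup \<eta> (lfp (qsem F))"
  have fixpoint: "qsem F ?\<mu> = ?\<mu>"
    using lfp_fixpoint[OF mono_qsem] .
  have "?\<mu> \<le> u"
    using order_trans[OF qsem_le_qsem_qmaxify[OF assms(1)] assms(2)] by (rule lfp_lowerbound)
  moreover have "u \<le> r"
    using assms(4)
    by (auto simp: le_fun_def intro: order_trans[OF add_increasing[OF zero_le order_refl]])
  ultimately have "\<forall>v. ?\<mu> v < \<infinity>"
    using assms(3) by (auto simp: le_fun_def intro: le_less_trans order_trans)
  moreover have "?\<nu> \<le> qsem F ?\<nu>"
  proof (rule sup_least)
    show "\<eta> \<le> qsem F ?\<nu>"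
      using order_trans[OF assms(6) monoD[OF mono_qsem sup_ge1]] .
    show "?\<mu> \<le> qsem F ?\<nu>"
      using monoD[OF mono_qsem[of F] sup_ge2[of ?\<mu> \<eta>]] by (simp only: fixpoint)
  qed
  ultimately have "?\<nu> - ?\<mu> \<le> qsem (qD (qmaxify F)) (?\<nu> - ?\<mu>)"
    using postfixpoint_increment_le_qD[OF assms(1) fixpoint] by simp
  moreover have "?\<nu> - ?\<mu> \<le> u"
    using assms(5) \<open>?\<mu> \<le> u\<close>
    by (auto simp: le_fun_def intro: order_trans[OF diff_le_self_ennreal])
  ultimately have "?\<nu> - ?\<mu> = 0"
    using subsolution_eq_0[OF mono_qsem qsem_qD_cmult[OF qwf_qmaxify[OF assms(1)]] assms(4,3)]
    by blast
  then show ?thesis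
    by (auto simp: le_fun_def fun_eq_iff diff_eq_0_iff_ennreal)
qed

end
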